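(* Assume the standing setting below and run the DMFW algorithm with $\eta_k=\frac{2}{k+2}$ (and any $\gamma_k\in(0,1]$). Then for every $i\in\mathcal N$ and $k\ge1$, $$\|\hat x_k^i-\bar x_k\|\le\frac{2C_1}{k+2},\qquad C_1=k_0\sqrt nD.$$
   Context: Setting. There are $n$ agents $\mathcal N=\{1,\dots,n\}$ connected by a connected graph $\mathcal G=(\mathcal N,\mathcal E)$ with weight matrix $C=[c_{ij}]\in\mathbb R^{n\times n}$, where $c_{ij}\ge 0$ and $c_{ij}=0$ whenever $j\ne i$ and $(i,j)\notin\mathcal E$. $C$ is doubly stochastic, i.e. all row sums and all column sums equal $1$. Let $\lambda$ be the second largest eigenvalue of $C$ in magnitude. It is assumed that $|\lambda|<1$ and that for all vectors $x^1,\dots,x^n\in\mathbb R^p$, with $\bar x=\frac1n\sum_i x^i$ and $\hat x^i=\sum_j c_{ij}x^j$, one has $\big(\sum_i\|\hat x^i-\bar x\|^2\big)^{1/2}\le|\lambda|\big(\sum_i\|x^i-\bar x\|^2\big)^{1/2}$. Let $k_0$ be the smallest positive integer with $|\lambda|\le (k_0/(k_0+1))^2$. Problem data. $\mathcal X\subset\mathbb R^p$ is convex and compact with diameter $D$, i.e. $\|x-x'\|\le D$ for all $x,x'\in\mathcal X$. For each $i$, $\xi^i$ is a random variable. The function $f_i(\cdot,\xi)$ is differentiable with $L$-Lipschitz gradient for every $\xi$. $F_i(x)=\mathbb E[f_i(x,\xi^i)]$ is differentiable with $\nabla F_i(x)=\mathbb E[\nabla f_i(x,\xi^i)]$ and $L$-Lipschitz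 gradient. For all $x\in\mathcal X$ and $i$, $\mathbb E\|\nabla F_i(x)-\nabla f_i(x,\xi^i)\|^2\le\delta^2$. Set $F=\frac1n\sum_{i=1}^nF_i$. DMFW algorithm. Fix step sizes $\gamma_k,\eta_k\in(0,1]$ and deterministic initial points $x_1^i\in\mathcal X$. The samples $\xi_k^i$ ($k\ge1$, $i\in\mathcal N$) are mutually independent, and $\xi_k^i$ has the distribution of $\xi^i$. For $k=1,2,\dots$ and each $i$: - $\hat x_k^i=\sum_{j=1}^n c_{ij}x_k^j$. - For $k=1$: $y_1^i=s_1^i=\nabla f_i(\hat x_1^i,\xi_1^i)$. For $k\ge2$: $y_k^i=(1-\gamma_k)y_{k-1}^i+\nabla f_i(\hat x_k^i,\xi_k^i)-(1-\gamma_k)\nabla f_i(\hat x_{k-1}^i,\xi_k^i)$ and $s_k^i=\sum_j c_{ij}s_{k-1}^j+y_k^i-y_{k-1}^i$. - $p_k^i=\sum_j c_{ij}s_k^j$. - $\theta_k^i\in\arg\min_{\phi\in\mathcal X}\langle p_k^i,\phi\rangle$. - $x_{k+1}^i=\hat x_k^i+\eta_k(\theta_k^i-\hat x_k^i)$. Notation: $\bar x_k=\frac1n\sum_i x_k^i$. *)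

theory Defs
  imports "HOL-Analysis.Analysis" "Jordan_Normal_Form.Char_Poly"
begin

definition weight_cmat :: "nat \<Rightarrow> (nat \<Rightarrow> nat \<Rightarrow> real) \<Rightarrow> complex Matrix.mat" where
  "weight_cmat n C = Matrix.mat n n (\<lambda>(i,j). complex_of_real (C i j))"

text \<open>Eigenvalues of C (complex roots of the characteristic polynomial), with the
  top eigenvalue 1 of a doubly stochastic matrix removed once (counting algebraic multiplicity).\<close>
definition remaining_eigs :: "nat \<Rightarrow> (nat \<Rightarrow> nat \<Rightarrow> real) \<Rightarrow> complex set" where
  "remaining_eigs n C =
     {\<mu>. poly (char_poly (weight_cmat n C)) \<mu> = 0 \<and>
          (\<mu> \<noteq> 1 \<or> order 1 (char_poly (weight_cmat n C)) \<ge> 2)}"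

text \<open>Magnitude of the second largest eigenvalue (in magnitude); 0 if there is none (n = 1).\<close>
definition second_eig_mag :: "nat \<Rightarrow> (nat \<Rightarrow> nat \<Rightarrow> real) \<Rightarrow> real" where
  "second_eig_mag n C =
     (if remaining_eigs n C = {} then 0 else Max (cmod ` remaining_eigs n C))"

definition doubly_stochastic :: "nat \<Rightarrow> (nat \<Rightarrow> nat \<Rightarrow> real) \<Rightarrow> bool" where
  "doubly_stochastic n C \<longleftrightarrow>
     (\<forall>i<n. \<forall>j<n. C i j \<ge> 0) \<and>
     (\<forall>i<n. (\<Sum>j<n. C i j) = 1) \<and> (\<forall>j<n. (\<Sum>i<n. C i j) = 1)"

definition connected_graph :: "nat \<Rightarrow> (nat \<times> nat) set \<Rightarrow> bool" where
  "connected_graph n E \<longleftrightarrow>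
     E \<subseteq> {..<n} \<times> {..<n} \<and> sym E \<and> (\<forall>i<n. \<forall>j<n. (i, j) \<in> E\<^sup>*)"

definition avg :: "nat \<Rightarrow> (nat \<Rightarrow> 'a::real_vector) \<Rightarrow> 'a" where
  "avg n x = (1 / real n) *\<^sub>R (\<Sum>i<n. x i)"

definition k0_of :: "real \<Rightarrow> nat" where
  "k0_of lam = (LEAST k::nat. 0 < k \<and> \<bar>lam\<bar> \<le> (real k / (real k + 1))\<^sup>2)"

end

theory Submission
  imports Defs
begin

text \<open>Measure disagreement by the spread, the \<open>\<ell>\<^sub>2\<close>-norm of the deviations of the agents
  from their mean. A doubly stochastic mixing step preserves the mean and contracts the spread
  by \<open>\<lambda>\<close>; the Frank--Wolfe step, which moves each mixed point a fraction \<open>\<eta>\<^sub>k\<close> towards a point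
  of a set of diameter \<open>D\<close>, adds at most \<open>\<eta>\<^sub>k \<surd>n D\<close>. The spread \<open>A\<^sub>k\<close> of the mixed points
  therefore satisfies \<open>A\<^sub>k\<^sub>+\<^sub>1 \<le> \<lambda> (k/(k+2) A\<^sub>k + 2/(k+2) \<surd>n D)\<close>. For \<open>k \<le> 2k\<^sub>0\<close> the bound
  \<open>A\<^sub>k \<le> \<lambda> \<surd>n D \<le> k\<^sub>0/(k\<^sub>0+1) \<surd>n D\<close> already suffices; beyond that the claimed rate propagates by
  induction because \<open>\<lambda> \<le> (k\<^sub>0/(k\<^sub>0+1))\<^sup>2\<close>.\<close>

definition spread :: "nat \<Rightarrow> (nat \<Rightarrow> 'a::real_normed_vector) \<Rightarrow> real" where
  "spread n z = L2_set (\<lambda>i. norm (z i - avg n z)) {..<n}"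

lemma avg_cong: "(\<And>i. i < n \<Longrightarrow> z i = w i) \<Longrightarrow> avg n z = avg n w"
  by (simp add: avg_def)

lemma spread_cong: "(\<And>i. i < n \<Longrightarrow> z i = w i) \<Longrightarrow> spread n z = spread n w"
  unfolding spread_def by (metis (no_types, lifting) L2_set_cong avg_cong lessThan_iff)

lemma norm_sub_avg_le_spread: "i < n \<Longrightarrow> norm (z i - avg n z) \<le> spread n z"
  unfolding spread_def by (rule member_le_L2_set) auto

lemma avg_lin_comb: "avg n (\<lambda>i. a *\<^sub>R u i + b *\<^sub>R v i) = a *\<^sub>R avg n u + b *\<^sub>R avg n v"
  by (simp add: avg_def sum.distrib scaleR_sum_right scaleR_add_right)

lemma spread_lin_comb_le:
  assumes "0 \<le> a" "0 \<le> b"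
  shows "spread n (\<lambda>i. a *\<^sub>R u i + b *\<^sub>R v i) \<le> a * spread n u + b * spread n v"
proof -
  have dev: "norm ((a *\<^sub>R u i + b *\<^sub>R v i) - avg n (\<lambda>i. a *\<^sub>R u i + b *\<^sub>R v i))
      \<le> a * norm (u i - avg n u) + b * norm (v i - avg n v)" for i
  proof -
    have "(a *\<^sub>R u i + b *\<^sub>R v i) - avg n (\<lambda>i. a *\<^sub>R u i + b *\<^sub>R v i)
        = a *\<^sub>R (u i - avg n u) + b *\<^sub>R (v i - avg n v)"
      by (simp add: avg_lin_comb algebra_simps)
    then show ?thesis
      using assms norm_triangle_ineq[of "a *\<^sub>R (u i - avg n u)" "b *\<^sub>R (v i - avg n v)"] by simp
  qed
  have "spread n (\<lambda>i. a *\<^sub>R u i + b *\<^sub>R v i)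
      \<le> L2_set (\<lambda>i. a * norm (u i - avg n u) + b * norm (v i - avg n v)) {..<n}"
    unfolding spread_def using dev by (intro L2_set_mono) auto
  also have "\<dots> \<le> L2_set (\<lambda>i. a * norm (u i - avg n u)) {..<n}
      + L2_set (\<lambda>i. b * norm (v i - avg n v)) {..<n}"
    by (rule L2_set_triangle_ineq)
  also have "\<dots> = a * spread n u + b * spread n v"
    using assms by (simp add: spread_def L2_set_right_distrib)
  finally show ?thesis .
qed

lemma avg_mix:
  assumes "\<forall>j<n. (\<Sum>i<n. C i j) = 1"
  shows "avg n (\<lambda>i. \<Sum>j<n. C i j *\<^sub>R z j) = avg n z"
proof -
  have "(\<Sum>i<n. \<Sum>j<n. C i j *\<^sub>R z j) = (\<Sum>j<n. (\<Sum>i<n. C i j) *\<^sub>R z j)"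
    by (subst sum.swap) (simp add: scaleR_sum_left)
  also have "\<dots> = (\<Sum>j<n. z j)"
    using assms by simp
  finally show ?thesis
    by (simp add: avg_def)
qed

lemma norm_sub_avg_le:
  fixes w :: "nat \<Rightarrow> 'a::real_normed_vector"
  assumes "\<forall>i<n. \<forall>j<n. norm (w i - w j) \<le> D" "i < n"
  shows "norm (w i - avg n w) \<le> D"
proof -
  have "w i - avg n w = (1 / real n) *\<^sub>R (\<Sum>j<n. w i - w j)"
    using assms(2) by (simp add: avg_def sum_subtractf scaleR_diff_right sum_constant_scaleR)
  then have "norm (w i - avg n w) = (1 / real n) * norm (\<Sum>j<n. w i - w j)"
    by simp
  also have "\<dots> \<le> (1 / real n) * (\<Sum>j<n. D)"
    using assms by (intro mult_left_mono order.trans[OF norm_sum sum_mono]) auto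
  also have "\<dots> = D"
    using assms(2) by simp
  finally show ?thesis .
qed

lemma spread_le_diameter:
  fixes w :: "nat \<Rightarrow> 'a::real_normed_vector"
  assumes "\<forall>i<n. \<forall>j<n. norm (w i - w j) \<le> D"
  shows "spread n w \<le> sqrt (real n) * D"
proof (cases "n = 0")
  case False
  then have "0 \<le> D"
    using assms by (metis norm_ge_zero order_trans not_gr_zero)
  have "spread n w \<le> L2_set (\<lambda>i. D) {..<n}"
    unfolding spread_def using norm_sub_avg_le[OF assms] by (intro L2_set_mono) auto
  with \<open>0 \<le> D\<close> show ?thesis
    by (simp add: L2_set_constant)
qed (simp add: spread_def)

lemma spread_mix_le:
  assumes "\<forall>j<n. (\<Sum>i<n. C i j) = 1"
    and "sqrt (\<Sum>i<n. (norm ((\<Sum>j<n. C i j *\<^sub>R z j) - avg n z))\<^sup>2)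
      \<le> lam * sqrt (\<Sum>i<n. (norm (z i - avg n z))\<^sup>2)"
  shows "spread n (\<lambda>i. \<Sum>j<n. C i j *\<^sub>R z j) \<le> lam * spread n z"
  using assms by (simp add: spread_def L2_set_def avg_mix)

lemma spread_frank_wolfe_update_le:
  assumes update: "\<forall>i<n. x' i = z i + e *\<^sub>R (\<theta> i - z i)" and e: "0 \<le> e" "e \<le> 1"
    and \<theta>: "\<forall>i<n. \<theta> i \<in> X" and diam: "\<forall>u\<in>X. \<forall>v\<in>X. norm (u - v) \<le> D"
  shows "spread n x' \<le> (1 - e) * spread n z + e * (sqrt (real n) * D)"
proof -
  have "spread n x' = spread n (\<lambda>i. (1 - e) *\<^sub>R z i + e *\<^sub>R \<theta> i)"
    using update by (intro spread_cong) (simp add: algebra_simps)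
  also have "\<dots> \<le> (1 - e) * spread n z + e * spread n \<theta>"
    using e by (intro spread_lin_comb_le) auto
  also have "\<dots> \<le> (1 - e) * spread n z + e * (sqrt (real n) * D)"
    using \<theta> diam e by (intro add_left_mono mult_left_mono spread_le_diameter) auto
  finally show ?thesis .
qed

lemma second_eig_mag_nonneg: "0 \<le> second_eig_mag n C"
proof -
  have "char_poly (weight_cmat n C) \<noteq> 0"
    using degree_monic_char_poly[of "weight_cmat n C" n] by (auto simp: weight_cmat_def)
  then have "finite (remaining_eigs n C)"
    unfolding remaining_eigs_def by (rule rev_finite_subset[OF poly_roots_finite]) auto
  show ?thesis
  proof (cases "remaining_eigs n C = {}")
    case False
    then obtain \<mu> where "\<mu> \<in> remaining_eigs n C"
      by blast
    with \<open>finite (remaining_eigs n C)\<close> have "cmod \<mu> \<le> Max (cmod ` remaining_eigs n C)"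
      by (intro Max_ge) auto
    with False show ?thesis
      by (simp add: second_eig_mag_def order.trans[OF norm_ge_zero])
  qed (simp add: second_eig_mag_def)
qed

lemma k0_of_spec:
  assumes "\<bar>lam\<bar> < 1"
  shows "0 < k0_of lam \<and> \<bar>lam\<bar> \<le> (real (k0_of lam) / (real (k0_of lam) + 1))\<^sup>2"
proof -
  have "(\<lambda>k. (real k / real (Suc k))\<^sup>2) \<longlonglongrightarrow> 1\<^sup>2"
    by (intro tendsto_power LIMSEQ_n_over_Suc_n)
  then have "\<forall>\<^sub>F k in sequentially. \<bar>lam\<bar> < (real k / real (Suc k))\<^sup>2"
    using assms by (intro order_tendstoD(1)) simp_all
  then obtain N where N: "\<And>k. N \<le> k \<Longrightarrow> \<bar>lam\<bar> < (real k / real (Suc k))\<^sup>2"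
    unfolding eventually_sequentially by blast
  have "\<bar>lam\<bar> < (real (Suc N) / real (Suc (Suc N)))\<^sup>2"
    by (rule N) simp
  then have "\<bar>lam\<bar> \<le> (real (Suc N) / (real (Suc N) + 1))\<^sup>2"
    by (simp only: of_nat_Suc[of "Suc N"] add.commute[of 1])
  then have "\<exists>k::nat. 0 < k \<and> \<bar>lam\<bar> \<le> (real k / (real k + 1))\<^sup>2"
    using zero_less_Suc by blast
  then show ?thesis
    unfolding k0_of_def by (rule LeastI_ex)
qed

lemma rate_step_ineq:
  fixes m k :: real
  assumes "1 \<le> m" "m \<le> k + 2" "0 \<le> k"
  shows "(m / (m + 1))\<^sup>2 * (k / (k + 2) * (2 * m / (k + 2)) + 2 / (k + 2)) \<le> 2 * m / (k + 3)"
proof -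
  define r where "r = m * (k + 3) * (k * m + k + 2) / ((m + 1) * (k + 2))\<^sup>2"
  have "m * (k + 3) \<le> (m + 1) * (k + 2)" "k * m + k + 2 \<le> (m + 1) * (k + 2)"
    using assms by (auto simp: algebra_simps)
  then have "m * (k + 3) * (k * m + k + 2) \<le> ((m + 1) * (k + 2)) * ((m + 1) * (k + 2))"
    by (rule mult_mono) (use assms in auto)
  then have "r \<le> 1"
    using assms by (simp add: r_def divide_le_eq power2_eq_square)
  have "k + 2 \<noteq> 0" "m + 1 \<noteq> 0" "k + 3 \<noteq> 0"
    using assms by auto
  then have "(m / (m + 1))\<^sup>2 * (k / (k + 2) * (2 * m / (k + 2)) + 2 / (k + 2)) = 2 * m / (k + 3) * r"
    by (simp add: r_def divide_simps power2_eq_square)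
  also have "\<dots> \<le> 2 * m / (k + 3)"
    using \<open>r \<le> 1\<close> assms by (intro mult_left_le) auto
  finally show ?thesis .
qed

lemma consensus_recursion_bounded:
  fixes A \<Delta> :: "nat \<Rightarrow> real" and lam d :: real
  assumes lam: "0 \<le> lam" "lam \<le> 1" and d: "0 \<le> d"
    and init: "\<Delta> 1 \<le> d"
    and mix: "\<And>k. 1 \<le> k \<Longrightarrow> A k \<le> lam * \<Delta> k"
    and step: "\<And>k. 1 \<le> k \<Longrightarrow> \<Delta> (Suc k) \<le> real k / (real k + 2) * A k + 2 / (real k + 2) * d"
    and k: "1 \<le> k"
  shows "\<Delta> k \<le> d"
  using k
proof (induction k rule: nat_induct_at_least)
  case (Suc k)
  have "A k \<le> d"
    using mix[OF Suc.hyps] mult_left_mono[OF Suc.IH lam(1)] mult_left_le_one_le[OF d lam] by linarith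
  then have "real k / (real k + 2) * A k \<le> real k / (real k + 2) * d"
    by (intro mult_left_mono) auto
  then have "\<Delta> (Suc k) \<le> real k / (real k + 2) * d + 2 / (real k + 2) * d"
    using step[OF Suc.hyps] by linarith
  also have "\<dots> = d"
    by (simp add: divide_simps) (simp add: algebra_simps)
  finally show ?case .
qed (rule init)

lemma consensus_recursion_bound:
  fixes A \<Delta> :: "nat \<Rightarrow> real" and lam m d :: real
  assumes lam: "0 \<le> lam" "lam \<le> (m / (m + 1))\<^sup>2" and m: "1 \<le> m" and d: "0 \<le> d"
    and init: "\<Delta> 1 \<le> d"
    and mix: "\<And>k. 1 \<le> k \<Longrightarrow> A k \<le> lam * \<Delta> k"
    and step: "\<And>k. 1 \<le> k \<Longrightarrow> \<Delta> (Suc k) \<le> real k / (real k + 2) * A k + 2 / (real k + 2) * d"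
    and k: "1 \<le> k"
  shows "A k \<le> 2 * m * d / (real k + 2)"
proof -
  have "m / (m + 1) \<le> 1"
    using m by auto
  then have lam_le: "lam \<le> m / (m + 1)"
    using lam(2) mult_left_le_one_le[of "m / (m + 1)" "m / (m + 1)"] m by (simp add: power2_eq_square)
  have A_le: "A k \<le> lam * d" if "1 \<le> k" for k
    using mix[OF that] mult_left_mono[OF consensus_recursion_bounded[OF lam(1) _ d init mix step that] lam(1)]
      lam_le \<open>m / (m + 1) \<le> 1\<close> by linarith
  have early: "A k \<le> 2 * m * d / (real k + 2)" if "1 \<le> k" "real k \<le> 2 * m" for k
  proof -
    have "m / (m + 1) \<le> 2 * m / (real k + 2)"
      using that m by (simp add: divide_simps)
    have "A k \<le> lam * d"
      using A_le[OF that(1)] .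
    also have "\<dots> \<le> m / (m + 1) * d"
      using lam_le d by (rule mult_right_mono)
    also have "\<dots> \<le> 2 * m / (real k + 2) * d"
      using \<open>m / (m + 1) \<le> 2 * m / (real k + 2)\<close> d by (rule mult_right_mono)
    finally show ?thesis
      by simp
  qed
  from k show ?thesis
  proof (induction k rule: nat_induct_at_least)
    case base
    show ?case
      using early[of 1] m by simp
  next
    case (Suc k)
    show ?case
    proof (cases "real (Suc k) \<le> 2 * m")
      case False
      then have "m \<le> real k + 2"
        using m by simp
      define F where "F = real k / (real k + 2) * (2 * m / (real k + 2)) + 2 / (real k + 2)"
      have "0 \<le> F"
        using m by (simp add: F_def)
      have "real k / (real k + 2) * A k \<le> real k / (real k + 2) * (2 * m * d / (real k + 2))"
        using Suc.IH by (intro mult_left_mono) auto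
      then have "\<Delta> (Suc k) \<le> d * F"
        using step[OF Suc.hyps] by (simp add: F_def algebra_simps)
      have "A (Suc k) \<le> lam * \<Delta> (Suc k)"
        using mix by simp
      also have "\<dots> \<le> lam * (d * F)"
        using \<open>\<Delta> (Suc k) \<le> d * F\<close> lam(1) by (rule mult_left_mono)
      also have "\<dots> \<le> (m / (m + 1))\<^sup>2 * (d * F)"
        using lam(2) d \<open>0 \<le> F\<close> by (intro mult_right_mono) auto
      also have "\<dots> = d * ((m / (m + 1))\<^sup>2 * F)"
        by simp
      also have "\<dots> \<le> d * (2 * m / (real k + 3))"
        using rate_step_ineq[OF m \<open>m \<le> real k + 2\<close>] d by (intro mult_left_mono) (auto simp: F_def)
      finally show ?thesis
        by (simp add: add.commute mult.commute)
    qed (use early[of "Suc k"] in simp)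
  qed
qed

theorem lemma1:
  fixes n :: nat and E :: "(nat \<times> nat) set" and C :: "nat \<Rightarrow> nat \<Rightarrow> real"
    and X :: "'a::euclidean_space set" and D L \<delta> :: real
    and f :: "nat \<Rightarrow> 'a \<Rightarrow> 'b \<Rightarrow> real" and g :: "nat \<Rightarrow> 'a \<Rightarrow> 'b \<Rightarrow> 'a"
    and \<xi> :: "nat \<Rightarrow> nat \<Rightarrow> 'b"
    and \<gamma> \<eta> :: "nat \<Rightarrow> real"
    and x xh y s p \<theta> :: "nat \<Rightarrow> nat \<Rightarrow> 'a"
  assumes n_pos: "0 < n"
    and graph: "connected_graph n E"
    and C_support: "\<forall>i<n. \<forall>j<n. j \<noteq> i \<and> (i, j) \<notin> E \<longrightarrow> C i j = 0"
    and C_ds: "doubly_stochastic n C"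
    and lam_lt1: "second_eig_mag n C < 1"
    and contraction: "\<forall>z :: nat \<Rightarrow> 'a.
          sqrt (\<Sum>i<n. (norm ((\<Sum>j<n. C i j *\<^sub>R z j) - avg n z))\<^sup>2)
            \<le> second_eig_mag n C * sqrt (\<Sum>i<n. (norm (z i - avg n z))\<^sup>2)"
    and X_convex: "convex X" and X_compact: "compact X"
    and X_diam: "\<forall>u\<in>X. \<forall>v\<in>X. norm (u - v) \<le> D"
    and f_grad: "\<forall>i<n. \<forall>e u. ((\<lambda>v. f i v e) has_derivative (\<lambda>h. g i u e \<bullet> h)) (at u)"
    and g_lip: "\<forall>i<n. \<forall>e u v. norm (g i u e - g i v e) \<le> L * norm (u - v)"
    and gamma: "\<forall>k\<ge>1. 0 < \<gamma> k \<and> \<gamma> k \<le> 1"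
    and eta: "\<forall>k. \<eta> k = 2 / (real k + 2)"
    and init: "\<forall>i<n. x 1 i \<in> X"
    and xh_def: "\<forall>k\<ge>1. \<forall>i<n. xh k i = (\<Sum>j<n. C i j *\<^sub>R x k j)"
    and y1: "\<forall>i<n. y 1 i = g i (xh 1 i) (\<xi> 1 i)"
    and s1: "\<forall>i<n. s 1 i = y 1 i"
    and y_rec: "\<forall>k\<ge>2. \<forall>i<n. y k i = (1 - \<gamma> k) *\<^sub>R y (k - 1) i + g i (xh k i) (\<xi> k i)
                   - (1 - \<gamma> k) *\<^sub>R g i (xh (k - 1) i) (\<xi> k i)"
    and s_rec: "\<forall>k\<ge>2. \<forall>i<n. s k i = (\<Sum>j<n. C i j *\<^sub>R s (k - 1) j) + y k i - y (k - 1) i"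
    and p_def: "\<forall>k\<ge>1. \<forall>i<n. p k i = (\<Sum>j<n. C i j *\<^sub>R s k j)"
    and theta_lmo: "\<forall>k\<ge>1. \<forall>i<n. \<theta> k i \<in> X \<and> (\<forall>\<phi>\<in>X. p k i \<bullet> \<theta> k i \<le> p k i \<bullet> \<phi>)"
    and x_rec: "\<forall>k\<ge>1. \<forall>i<n. x (k + 1) i = xh k i + \<eta> k *\<^sub>R (\<theta> k i - xh k i)"
  shows "\<forall>i<n. \<forall>k\<ge>1. norm (xh k i - avg n (x k))
           \<le> 2 * (real (k0_of (second_eig_mag n C)) * sqrt (real n) * D) / (real k + 2)"

proof -
  define lam where "lam = second_eig_mag n C"
  define m where "m = k0_of lam"
  define d where "d = sqrt (real n) * D"
  have "0 \<le> lam" "lam < 1"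
    using second_eig_mag_nonneg lam_lt1 by (auto simp: lam_def)
  then have m: "1 \<le> real m" "lam \<le> (real m / (real m + 1))\<^sup>2"
    using k0_of_spec[of lam] by (auto simp: m_def)
  have "0 \<le> D"
    using X_diam init n_pos by (metis norm_ge_zero order_trans)
  then have "0 \<le> d"
    by (simp add: d_def)
  have col: "\<forall>j<n. (\<Sum>i<n. C i j) = 1"
    using C_ds by (simp add: doubly_stochastic_def)
  have xh_avg: "avg n (xh k) = avg n (x k)"
    and xh_mix: "spread n (xh k) \<le> lam * spread n (x k)" if "1 \<le> k" for k
  proof -
    have "avg n (xh k) = avg n (\<lambda>i. \<Sum>j<n. C i j *\<^sub>R x k j)"
      "spread n (xh k) = spread n (\<lambda>i. \<Sum>j<n. C i j *\<^sub>R x k j)"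
      using xh_def that by (auto intro!: avg_cong spread_cong)
    then show "avg n (xh k) = avg n (x k)" "spread n (xh k) \<le> lam * spread n (x k)"
      using avg_mix[OF col] spread_mix_le[OF col contraction[rule_format]] by (simp_all add: lam_def)
  qed
  have x_step: "spread n (x (Suc k)) \<le> real k / (real k + 2) * spread n (xh k) + 2 / (real k + 2) * d"
    if "1 \<le> k" for k
  proof -
    have \<eta>: "0 \<le> \<eta> k" "\<eta> k \<le> 1" "1 - \<eta> k = real k / (real k + 2)"
      by (simp_all add: eta divide_simps)
    have "\<forall>i<n. x (Suc k) i = xh k i + \<eta> k *\<^sub>R (\<theta> k i - xh k i)" "\<forall>i<n. \<theta> k i \<in> X"
      using x_rec theta_lmo that by simp_all
    from spread_frank_wolfe_update_le[OF this(1) \<eta>(1,2) this(2) X_diam]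
    show ?thesis
      unfolding \<eta>(3) d_def by (simp add: eta)
  qed
  have "spread n (x 1) \<le> d"
    using init X_diam by (simp add: d_def spread_le_diameter)
  then have bound: "spread n (xh k) \<le> 2 * real m * d / (real k + 2)" if "1 \<le> k" for k
    using consensus_recursion_bound[where A = "\<lambda>k::nat. spread n (xh k)" and \<Delta> = "\<lambda>k::nat. spread n (x k)",
        OF \<open>0 \<le> lam\<close> m(2) m(1) \<open>0 \<le> d\<close>] xh_mix x_step that by blast
  show ?thesis
  proof (intro allI impI)
    fix i k :: nat
    assume "i < n" "1 \<le> k"
    then have "norm (xh k i - avg n (x k)) \<le> spread n (xh k)"
      using norm_sub_avg_le_spread[of i n "xh k"] xh_avg by simp
    also have "\<dots> \<le> 2 * real m * d / (real k + 2)"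
      using bound \<open>1 \<le> k\<close> .
    finally show "norm (xh k i - avg n (x k))
        \<le> 2 * (real (k0_of (second_eig_mag n C)) * sqrt (real n) * D) / (real k + 2)"
      by (simp add: m_def lam_def d_def mult.assoc)
  qed
qed

end
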